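(* Let $p$ be an odd prime and $m,r$ integers with $m>0$ and $r\equiv 1\bmod p$. Then for every integer $0\le x<p^m$ there is a unique integer $0\le y<p^m$ such that $\mathcal{S}_r(y)\equiv x\bmod p^m$.
   Context: For integers $s$ and $n\ge0$, $\mathcal{S}_s(n)=\sum_{i=0}^{n-1}s^i$. *)

theory Defs
  imports "HOL-Number_Theory.Number_Theory"
begin

definition S :: "int \<Rightarrow> nat \<Rightarrow> int" where
  "S s n = (\<Sum>i<n. s ^ i)"

end

theory Submission
  imports Defs
begin

(* The map k \<mapsto> S r k preserves the p-adic valuation: S r (p * n) = S r p * S (r ^ p) n,
   where r ^ p is again 1 mod p and S r p is p times a unit, because for odd p
   S r p \<equiv> p + p^2 t (p - 1)/2 \<equiv> p mod p^2 when r = 1 + p t.  Since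
   S r b - S r a = r ^ a * S r (b - a) with r a unit mod p, a congruence
   S r a \<equiv> S r b mod p^m forces a \<equiv> b mod p^m.  So y \<mapsto> S r y is injective on
   residues mod p^m, hence bijective by counting. *)

lemma S_add: "S r (n + k) = S r n + r ^ n * S r k"
  by (induction k) (simp_all add: S_def power_add algebra_simps)

lemma S_mult: "S r (a * b) = S r a * S (r ^ a) b"
proof (induction b)
  case 0
  then show ?case by (simp add: S_def)
next
  case (Suc b)
  have "S r (a * Suc b) = S r (a * b) + r ^ (a * b) * S r a"
    by (metis S_add mult_Suc_right add.commute)
  also have "\<dots> = S r a * (S (r ^ a) b + (r ^ a) ^ b)"
    using Suc by (simp add: algebra_simps power_mult)
  also have "\<dots> = S r a * S (r ^ a) (Suc b)"
    by (simp add: S_def)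
  finally show ?case .
qed

lemma S_cong_of_cong_1:
  assumes "[r = 1] (mod q)"
  shows "[S r k = int k] (mod q)"
proof -
  have "[(\<Sum>i<k. r ^ i) = (\<Sum>i<k. 1)] (mod q)"
    by (rule cong_sum) (metis assms cong_pow power_one)
  then show ?thesis
    by (simp add: S_def)
qed

lemma one_plus_mult_power_cong:
  fixes q t :: int
  shows "[(1 + q * t) ^ i = 1 + int i * q * t] (mod q ^ 2)"
proof (induction i)
  case 0
  then show ?case by simp
next
  case (Suc i)
  have "[(1 + q * t) ^ Suc i = (1 + int i * q * t) * (1 + q * t)] (mod q ^ 2)"
    using Suc by (simp add: cong_mult mult.commute)
  also have "(1 + int i * q * t) * (1 + q * t) = 1 + int (Suc i) * q * t + (int i * t ^ 2) * q ^ 2"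
    by (simp add: algebra_simps power2_eq_square)
  also have "[\<dots> = 1 + int (Suc i) * q * t] (mod q ^ 2)"
    by (simp add: cong_iff_dvd_diff)
  finally show ?case .
qed

lemma S_cong_odd_square:
  assumes "odd n" and "[r = 1] (mod int n)"
  shows "[S r n = int n] (mod (int n) ^ 2)"
proof -
  obtain t where t: "r = 1 + int n * t"
    using assms(2) by (metis cong_iff_lin cong_sym)
  obtain h where h: "n = 2 * h + 1"
    using assms(1) oddE by blast
  have "2 * (\<Sum>i<n. int i) = int n * (int n - 1)"
    by (induction n) (auto simp: algebra_simps)
  then have gauss: "(\<Sum>i<n. int i) = int n * int h"
    using h by simp
  have "[S r n = (\<Sum>i<n. 1 + int i * int n * t)] (mod (int n) ^ 2)"
    unfolding S_def t by (rule cong_sum) (rule one_plus_mult_power_cong)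
  also have "(\<Sum>i<n. 1 + int i * int n * t) = int n + int n * t * (\<Sum>i<n. int i)"
    by (simp add: sum.distrib sum_distrib_left sum_distrib_right algebra_simps)
  also have "\<dots> = int n + (int n) ^ 2 * (t * int h)"
    by (simp add: gauss power2_eq_square algebra_simps)
  also have "[\<dots> = int n] (mod (int n) ^ 2)"
    by (simp add: cong_iff_dvd_diff)
  finally show ?thesis .
qed

lemma S_prime_eq_mult_coprime:
  assumes "prime p" and "odd p" and "[r = 1] (mod int p)"
  obtains u where "S r p = int p * u" and "coprime (int p) u"
proof -
  obtain k where k: "S r p = int p + (int p) ^ 2 * k"
    using S_cong_odd_square[OF assms(2,3)] by (metis cong_iff_lin cong_sym)
  have "\<not> int p dvd 1 + int p * k"
    using prime_gt_1_nat[OF assms(1)] by (simp add: dvd_add_left_iff)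
  then have "coprime (int p) (1 + int p * k)"
    using assms(1) by (simp add: prime_imp_coprime)
  moreover have "S r p = int p * (1 + int p * k)"
    using k by (simp add: power2_eq_square algebra_simps)
  ultimately show ?thesis
    using that by blast
qed

lemma prime_power_dvd_S_imp_dvd:
  assumes "prime p" and "odd p" and "[r = 1] (mod int p)" and "(int p) ^ j dvd S r k"
  shows "p ^ j dvd k"
  using assms(3,4)
proof (induction j arbitrary: r k)
  case 0
  then show ?case by simp
next
  case (Suc j)
  have "[S r k = int k] (mod int p)"
    using S_cong_of_cong_1 Suc.prems(1) by blast
  moreover have "int p dvd S r k"
    using Suc.prems(2) by (metis dvd_mult_left power_Suc)
  ultimately have "int p dvd int k"
    using cong_dvd_iff by blast
  then obtain n where n: "k = p * n"
    by auto
  obtain u where u: "S r p = int p * u" and "coprime (int p) u"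
    using S_prime_eq_mult_coprime[OF assms(1,2) Suc.prems(1)] .
  have "int p * (int p) ^ j dvd int p * (u * S (r ^ p) n)"
    using Suc.prems(2) by (simp add: n u S_mult)
  then have "(int p) ^ j dvd u * S (r ^ p) n"
    using assms(1) by simp
  then have "(int p) ^ j dvd S (r ^ p) n"
    using \<open>coprime (int p) u\<close> by (simp add: coprime_dvd_mult_right_iff coprime_commute)
  moreover have "[r ^ p = 1] (mod int p)"
    using Suc.prems(1) by (metis cong_pow power_one)
  ultimately have "p ^ j dvd n"
    using Suc.IH by blast
  then show ?case
    using n by simp
qed

lemma S_cong_imp_cong:
  assumes "prime p" and "odd p" and "[r = 1] (mod int p)"
    and "[S r a = S r b] (mod int (p ^ m))"
  shows "[a = b] (mod p ^ m)"
proof -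
  have "coprime r (int p)"
    using assms(3) by (metis cong_imp_coprime cong_sym coprime_1_left)
  then have unit: "coprime (int (p ^ m)) (r ^ k)" for k
    by (simp add: coprime_commute)
  have "[a = b] (mod p ^ m)" if "a \<le> b" and "[S r a = S r b] (mod int (p ^ m))" for a b
  proof -
    have "S r b = S r a + r ^ a * S r (b - a)"
      using S_add[of r a "b - a"] \<open>a \<le> b\<close> by simp
    then have "int (p ^ m) dvd r ^ a * S r (b - a)"
      using that(2) by (simp add: cong_iff_dvd_diff dvd_diff_commute)
    then have "(int p) ^ m dvd S r (b - a)"
      using unit[of a] by (simp add: coprime_dvd_mult_right_iff)
    then have "p ^ m dvd b - a"
      using prime_power_dvd_S_imp_dvd[OF assms(1-3)] by blast
    then show ?thesis
      using \<open>a \<le> b\<close> by (metis cong_altdef_nat cong_sym)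
  qed
  then show ?thesis
    using assms(4) by (metis cong_sym nat_le_linear)
qed

lemma ex1_cong_if_inj_mod:
  fixes f :: "nat \<Rightarrow> int"
  assumes inj: "\<And>a b. a < N \<Longrightarrow> b < N \<Longrightarrow> [f a = f b] (mod int N) \<Longrightarrow> a = b"
    and "x < N"
  shows "\<exists>!y. y < N \<and> [f y = int x] (mod int N)"
proof -
  define g where "g y = nat (f y mod int N)" for y
  have g_cong: "[f y = int (g y)] (mod int N)" for y
    using \<open>x < N\<close> by (simp add: g_def cong_def)
  have "inj_on g {..<N}"
    by (rule inj_onI) (metis g_cong inj lessThan_iff cong_sym cong_trans)
  moreover have "g ` {..<N} \<subseteq> {..<N}"
    using \<open>x < N\<close> by (auto simp: g_def nat_less_iff)
  ultimately have "g ` {..<N} = {..<N}"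
    by (simp add: endo_inj_surj)
  then obtain y where "y < N" and "g y = x"
    using \<open>x < N\<close> by (metis imageE lessThan_iff)
  then show ?thesis
    by (metis g_cong inj cong_sym cong_trans)
qed

theorem lemma2p2:
  fixes p m :: nat and r :: int
  assumes "prime p" and "odd p" and "m > 0" and "[r = 1] (mod int p)"
  shows "\<forall>x::nat. x < p ^ m \<longrightarrow>
           (\<exists>!y::nat. y < p ^ m \<and> [S r y = int x] (mod int (p ^ m)))"
proof (intro allI impI)
  fix x
  assume "x < p ^ m"
  have "a = b" if "a < p ^ m" and "b < p ^ m" and "[S r a = S r b] (mod int (p ^ m))" for a b
    using S_cong_imp_cong[OF assms(1,2,4) that(3)] that(1,2) cong_less_modulus_unique_nat by blast
  then show "\<exists>!y. y < p ^ m \<and> [S r y = int x] (mod int (p ^ m))"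
    using ex1_cong_if_inj_mod \<open>x < p ^ m\<close> by blast
qed

end
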